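(* Let $n,x$ be integers with $1<x<n$, so that $G=C_{2n}(x,1,n)$ is a $5$-regular circulant graph. If $n\equiv 2 \pmod 3$, $x\equiv 1\pmod 3$ and $x<\tfrac{n}{2}$, then $G$ is word-representable.
   Context: Two distinct letters $x,y$ alternate in a word $w$ if, after deleting all other letters from $w$, the resulting word is of the form $xyxy\cdots$ or $yxyx\cdots$ (of even or odd length). A graph $G=(V,E)$ is word-representable if there is a word $w$ over the alphabet $V$, containing every letter of $V$ at least once, such that for all distinct $x,y\in V$, $xy\in E$ if and only if $x$ and $y$ alternate in $w$. For an integer $m$ and a set $R$ of positive integers each at most $m/2$, the circulant graph $C_m(R)$ has vertex set $\{0,1,\dots,m-1\}$, with $i$ and $j$ adjacent iff $\min(|i-j|,\,m-|i-j|)\in R$. $C_{2n}(x,1,n)$ denotes the circulant graph on $2n$ vertices with jump set $\{1,x,n\}$; it is $5$-regular exactly when $1<x<n$. *)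

theory Defs
  imports Main
begin

definition alternate :: "'a list \<Rightarrow> 'a \<Rightarrow> 'a \<Rightarrow> bool" where
  "alternate w x y \<longleftrightarrow>
     (let u = filter (\<lambda>z. z = x \<or> z = y) w in
        \<forall>i. Suc i < length u \<longrightarrow> u ! i \<noteq> u ! Suc i)"

definition word_representable :: "'a set \<Rightarrow> ('a \<Rightarrow> 'a \<Rightarrow> bool) \<Rightarrow> bool" where
  "word_representable V E \<longleftrightarrow>
     (\<exists>w. set w = V \<and>
          (\<forall>x\<in>V. \<forall>y\<in>V. x \<noteq> y \<longrightarrow> (E x y \<longleftrightarrow> alternate w x y)))"

definition circ_vertices :: "nat \<Rightarrow> nat set" where
  "circ_vertices m = {0..<m}"

definition circ_adj :: "nat \<Rightarrow> nat set \<Rightarrow> nat \<Rightarrow> nat \<Rightarrow> bool" where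
  "circ_adj m R i j \<longleftrightarrow>
     i < m \<and> j < m \<and> i \<noteq> j \<and>
     min (if i \<le> j then j - i else i - j) (m - (if i \<le> j then j - i else i - j)) \<in> R"

end

theory Submission
  imports Defs
begin

text \<open>
  The graph is 3-colourable, and every 3-colourable graph is word-representable.

  For the colouring, pick a multiplier t such that t, t x and t n, taken modulo 2n, all lie in
  the middle third of the circle \<open>\<int>/2n\<close>; then colouring i by the third that contains t i
  gives adjacent vertices different colours. Such a t is \<open>(2n + 5)/3\<close> if \<open>5x \<le> 2n\<close>; otherwise
  it is n or n + 2 when n is odd, and 2m + k for a suitable odd k when n = 2m.

  For a 3-colouring, list the colour classes in order and then in reverse order: every
  edge u v between different classes reads u v u v, and two vertices of the same class
  cannot alternate. Then append one gadget per non-edge p q between different classes; it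
  breaks the alternation of p and q and adds u v u v or nothing to every edge u v.
\<close>

section \<open>Word-representability of 3-colourable graphs\<close>

lemma alternate_iff_distinct_adj:
  "alternate w x y \<longleftrightarrow> distinct_adj (filter (\<lambda>z. z = x \<or> z = y) w)"
  by (simp add: alternate_def distinct_adj_conv_nth Let_def)

lemma alternate_commute: "alternate w x y \<longleftrightarrow> alternate w y x"
  by (simp add: alternate_def disj_commute)

lemma alternate_infixD: "alternate (a @ w @ b) x y \<Longrightarrow> alternate w x y"
  by (auto simp: alternate_iff_distinct_adj)

lemma distinct_adj_concat_blocks:
  assumes "u \<noteq> v" and "\<And>l. l \<in> set ls \<Longrightarrow> l = [] \<or> l = [u, v, u, v]"
  shows "distinct_adj (concat ls)"
proof -
  have "distinct_adj (concat ls) \<and> (concat ls = [] \<or> hd (concat ls) = u)"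
    using assms(2)
  proof (induction ls)
    case (Cons l ls)
    then have "l = [] \<or> l = [u, v, u, v]" and IH: "distinct_adj (concat ls)"
      "concat ls = [] \<or> hd (concat ls) = u" by auto
    then show ?case using assms(1) by (auto simp: distinct_adj_Cons)
  qed simp
  then show ?thesis ..
qed

lemma filter_pair_filter:
  "filter (\<lambda>z. z = u \<or> z = v) (filter P xs) = filter P (filter (\<lambda>z. z = u \<or> z = v) xs)"
  by (simp add: filter_filter conj_commute)

lemma filter_pair_distinct:
  assumes "distinct xs" "u \<in> set xs" "v \<in> set xs" "u \<noteq> v"
  shows "filter (\<lambda>z. z = u \<or> z = v) xs = [u, v] \<or> filter (\<lambda>z. z = u \<or> z = v) xs = [v, u]"
proof -
  let ?s = "filter (\<lambda>z. z = u \<or> z = v) xs"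
  have "distinct ?s" "set ?s = {u, v}" using assms by auto
  then have "length ?s = 2" using assms(4) by (metis distinct_card card_2_iff)
  then obtain a b where "?s = [a, b]" by (auto simp: length_Suc_conv numeral_2_eq_2)
  with \<open>set ?s = {u, v}\<close> \<open>distinct ?s\<close> show ?thesis by (auto simp: doubleton_eq_iff)
qed

definition colour_layers :: "('a \<Rightarrow> nat) \<Rightarrow> 'a list \<Rightarrow> 'a list" where
  "colour_layers col vs = [z\<leftarrow>vs. col z = 0] @ [z\<leftarrow>vs. col z = 1] @ [z\<leftarrow>vs. col z = 2]"

text \<open>
  In the first two cases q is moved in front of p without breaking the order of any edge at q.
  For col p = 0 and col q = 2 this is impossible when p and q have a common neighbour of
  colour 1, hence the different shape of the third case.
\<close>
definition nonedge_gadget ::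
    "('a \<Rightarrow> nat) \<Rightarrow> ('a \<Rightarrow> 'a \<Rightarrow> bool) \<Rightarrow> 'a list \<Rightarrow> 'a \<Rightarrow> 'a \<Rightarrow> 'a list" where
  "nonedge_gadget col E vs p q =
    (if E p q then []
     else if col p = 0 \<and> col q = 1 then
       [z\<leftarrow>vs. col z = 0 \<and> E z q] @ q # [z\<leftarrow>vs. col z = 0 \<and> \<not> E z q] @
       [z\<leftarrow>vs. col z = 1 \<and> z \<noteq> q] @ [z\<leftarrow>vs. col z = 2] @ colour_layers col vs
     else if col p = 1 \<and> col q = 2 then
       [z\<leftarrow>vs. col z = 0] @ [z\<leftarrow>vs. col z = 1 \<and> E z q] @ q # [z\<leftarrow>vs. col z = 1 \<and> \<not> E z q] @
       [z\<leftarrow>vs. col z = 2 \<and> z \<noteq> q] @ colour_layers col vs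
     else if col p = 0 \<and> col q = 2 then
       [z\<leftarrow>vs. col z = 0] @ [z\<leftarrow>vs. col z = 1] @ [z\<leftarrow>vs. col z = 2 \<and> z \<noteq> q] @
       [z\<leftarrow>vs. col z = 0 \<and> \<not> E z q] @ q # [z\<leftarrow>vs. col z = 0 \<and> E z q] @
       [z\<leftarrow>vs. col z = 1] @ [z\<leftarrow>vs. col z = 2]
     else [])"

definition three_colouring_word ::
    "('a \<Rightarrow> nat) \<Rightarrow> ('a \<Rightarrow> 'a \<Rightarrow> bool) \<Rightarrow> 'a list \<Rightarrow> 'a list" where
  "three_colouring_word col E vs =
     colour_layers col vs @ colour_layers col (rev vs) @
     concat (map (\<lambda>(p, q). nonedge_gadget col E vs p q) (List.product vs vs))"

lemma set_three_colouring_word: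
  assumes "\<forall>v\<in>set vs. col v < 3"
  shows "set (three_colouring_word col E vs) = set vs"
proof
  show "set (three_colouring_word col E vs) \<subseteq> set vs"
    by (auto simp: three_colouring_word_def colour_layers_def nonedge_gadget_def)
  show "set vs \<subseteq> set (three_colouring_word col E vs)"
  proof
    fix v assume "v \<in> set vs"
    then have "col v = 0 \<or> col v = 1 \<or> col v = 2" using assms by auto
    with \<open>v \<in> set vs\<close> show "v \<in> set (three_colouring_word col E vs)"
      by (auto simp: three_colouring_word_def colour_layers_def)
  qed
qed

context
  fixes col :: "'a \<Rightarrow> nat" and E :: "'a \<Rightarrow> 'a \<Rightarrow> bool" and vs :: "'a list" and u v :: 'a
  assumes vs: "distinct vs" "u \<in> set vs" "v \<in> set vs"
begin

lemma filter_pair_colour_layers: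
  assumes "col u < col v" "col v < 3"
  shows "filter (\<lambda>z. z = u \<or> z = v) (colour_layers col vs @ colour_layers col (rev vs)) =
    [u, v, u, v]"
proof -
  have "u \<noteq> v" using assms by auto
  then show ?thesis using assms filter_pair_distinct[OF vs \<open>u \<noteq> v\<close>]
    by (auto simp: colour_layers_def filter_pair_filter rev_filter[symmetric] simp del: filter_filter)
qed

lemma not_alternate_colour_layers:
  assumes "col u = col v" "col v < 3" "u \<noteq> v"
  shows "\<not> alternate (colour_layers col vs @ colour_layers col (rev vs)) u v"
proof -
  have "col v = 0 \<or> col v = 1 \<or> col v = 2" using assms(2) by auto
  then show ?thesis using assms filter_pair_distinct[OF vs \<open>u \<noteq> v\<close>]
    by (auto simp: alternate_iff_distinct_adj colour_layers_def filter_pair_filter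
        rev_filter[symmetric] simp del: filter_filter)
qed

lemma filter_pair_nonedge_gadget:
  assumes "col u < col v" "col v < 3" "E u v" "E v u"
  shows "filter (\<lambda>z. z = u \<or> z = v) (nonedge_gadget col E vs p q) \<in> {[], [u, v, u, v]}"
proof -
  have "u \<noteq> v" using assms by auto
  have "col u = 0 \<and> col v = 1 \<or> col u = 0 \<and> col v = 2 \<or> col u = 1 \<and> col v = 2"
    using assms(1,2) by auto
  then show ?thesis using assms filter_pair_distinct[OF vs \<open>u \<noteq> v\<close>]
    by (auto simp: nonedge_gadget_def colour_layers_def filter_pair_filter
        simp del: filter_filter split: if_splits)
qed

lemma not_alternate_nonedge_gadget:
  assumes "col u < col v" "col v < 3" "\<not> E u v"
  shows "\<not> alternate (nonedge_gadget col E vs u v) u v"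
proof -
  have "u \<noteq> v" using assms by auto
  have "col u = 0 \<and> col v = 1 \<or> col u = 0 \<and> col v = 2 \<or> col u = 1 \<and> col v = 2"
    using assms(1,2) by auto
  then show ?thesis using assms filter_pair_distinct[OF vs \<open>u \<noteq> v\<close>]
    by (auto simp: alternate_iff_distinct_adj nonedge_gadget_def colour_layers_def
        filter_pair_filter simp del: filter_filter)
qed

lemma alternate_three_colouring_word_iff:
  assumes "col u < col v" "col v < 3" "E v u \<longleftrightarrow> E u v"
  shows "alternate (three_colouring_word col E vs) u v \<longleftrightarrow> E u v"
proof
  assume "E u v"
  let ?block = "\<lambda>(p, q). filter (\<lambda>z. z = u \<or> z = v) (nonedge_gadget col E vs p q)"
  have "filter (\<lambda>z. z = u \<or> z = v) (three_colouring_word col E vs) =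
      concat ([u, v, u, v] # map ?block (List.product vs vs))"
    using filter_pair_colour_layers[OF assms(1,2)]
    by (simp add: three_colouring_word_def filter_concat case_prod_unfold comp_def del: filter_filter)
  moreover have "distinct_adj (concat ([u, v, u, v] # map ?block (List.product vs vs)))"
    using assms \<open>E u v\<close> filter_pair_nonedge_gadget
    by (intro distinct_adj_concat_blocks) auto
  ultimately show "alternate (three_colouring_word col E vs) u v"
    by (simp add: alternate_iff_distinct_adj)
next
  assume "alternate (three_colouring_word col E vs) u v"
  show "E u v"
  proof (rule ccontr)
    assume "\<not> E u v"
    from vs have "(u, v) \<in> set (List.product vs vs)" by simp
    then obtain ps qs where "List.product vs vs = ps @ (u, v) # qs" by (meson split_list)
    then have "three_colouring_word col E vs =
        (colour_layers col vs @ colour_layers col (rev vs) @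
          concat (map (\<lambda>(p, q). nonedge_gadget col E vs p q) ps)) @
        nonedge_gadget col E vs u v @ concat (map (\<lambda>(p, q). nonedge_gadget col E vs p q) qs)"
      by (simp add: three_colouring_word_def)
    with \<open>alternate (three_colouring_word col E vs) u v\<close>
    have "alternate (nonedge_gadget col E vs u v) u v" by (metis alternate_infixD)
    with not_alternate_nonedge_gadget[OF assms(1,2) \<open>\<not> E u v\<close>] show False ..
  qed
qed

lemma not_alternate_three_colouring_word:
  assumes "col u = col v" "col v < 3" "u \<noteq> v"
  shows "\<not> alternate (three_colouring_word col E vs) u v"
proof
  assume "alternate (three_colouring_word col E vs) u v"
  then have "alternate ([] @ (colour_layers col vs @ colour_layers col (rev vs)) @
      concat (map (\<lambda>(p, q). nonedge_gadget col E vs p q) (List.product vs vs))) u v"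
    by (simp add: three_colouring_word_def)
  with not_alternate_colour_layers[OF assms] show False by (metis alternate_infixD)
qed

end

theorem three_colourable_imp_word_representable:
  assumes "finite V"
    and sym: "\<And>a b. a \<in> V \<Longrightarrow> b \<in> V \<Longrightarrow> E a b \<Longrightarrow> E b a"
    and col: "\<And>a. a \<in> V \<Longrightarrow> col a < (3::nat)"
    and proper: "\<And>a b. a \<in> V \<Longrightarrow> b \<in> V \<Longrightarrow> E a b \<Longrightarrow> col a \<noteq> col b"
  shows "word_representable V E"
proof -
  obtain vs where vs: "distinct vs" "set vs = V" using finite_distinct_list[OF \<open>finite V\<close>] by blast
  have "E a b \<longleftrightarrow> alternate (three_colouring_word col E vs) a b"
    if ab: "a \<in> set vs" "b \<in> set vs" "a \<noteq> b" for a b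
  proof -
    have "E a b \<longleftrightarrow> E b a" using sym ab vs(2) by blast
    moreover have "col a < 3" "col b < 3" using col ab vs(2) by auto
    ultimately show ?thesis
    proof (cases "col a" "col b" rule: linorder_cases)
      case less
      with \<open>E a b \<longleftrightarrow> E b a\<close> \<open>col b < 3\<close> show ?thesis
        using alternate_three_colouring_word_iff[OF vs(1) ab(1,2)] by simp
    next
      case equal
      with \<open>col b < 3\<close> have "\<not> alternate (three_colouring_word col E vs) a b"
        using not_alternate_three_colouring_word[OF vs(1) ab(1,2) _ _ ab(3)] by simp
      moreover have "\<not> E a b" using proper ab vs(2) equal by blast
      ultimately show ?thesis by simp
    next
      case greater
      with \<open>E a b \<longleftrightarrow> E b a\<close> \<open>col a < 3\<close> show ?thesis
        using alternate_three_colouring_word_iff[OF vs(1) ab(2,1)]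
          alternate_commute[of "three_colouring_word col E vs" a b] by simp
    qed
  qed
  moreover have "set (three_colouring_word col E vs) = V"
    using set_three_colouring_word[of vs col E] col vs(2) by auto
  ultimately show ?thesis unfolding word_representable_def vs(2) by blast
qed

section \<open>Colouring circulants by thirds of the circle\<close>

definition middle_third :: "nat \<Rightarrow> nat \<Rightarrow> bool" where
  "middle_third M r \<longleftrightarrow> M \<le> 3 * r \<and> 3 * r \<le> 2 * M"

definition third :: "nat \<Rightarrow> nat \<Rightarrow> nat" where
  "third M a = 3 * (a mod M) div M"

lemma third_less_3: "0 < M \<Longrightarrow> third M a < 3"
  by (simp add: third_def less_mult_imp_div_less mult.commute)

lemma third_mod [simp]: "third M (a mod M) = third M a"
  by (simp add: third_def)

lemma div_less_div_if_add_le: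
  fixes a b M :: nat
  assumes "0 < M" "a + M \<le> b"
  shows "a div M < b div M"
proof -
  have "a div M < (a + M) div M" using assms(1) by (simp add: div_add_self2)
  also have "\<dots> \<le> b div M" using assms(2) by (rule div_le_mono)
  finally show ?thesis .
qed

lemma third_add_middle_third:
  assumes "0 < M" "middle_third M (d mod M)"
  shows "third M (a + d) \<noteq> third M a"
proof -
  define a' r where "a' = a mod M" and "r = d mod M"
  have "a' < M" "M \<le> 3 * r" "3 * r \<le> 2 * M"
    using assms unfolding a'_def r_def middle_third_def by auto
  have sum: "(a + d) mod M = (a' + r) mod M" unfolding a'_def r_def by (simp add: mod_add_eq)
  show ?thesis
  proof (cases "a' + r < M")
    case True
    then have "3 * a' + M \<le> 3 * ((a + d) mod M)" using sum \<open>M \<le> 3 * r\<close> by simp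
    then show ?thesis
      using div_less_div_if_add_le[OF assms(1)] unfolding third_def a'_def by fastforce
  next
    case False
    then have "(a + d) mod M = a' + r - M"
      using sum \<open>a' < M\<close> \<open>3 * r \<le> 2 * M\<close> by (simp add: mod_if)
    then have "3 * ((a + d) mod M) + M \<le> 3 * a'" using False \<open>3 * r \<le> 2 * M\<close> by simp
    then show ?thesis
      using div_less_div_if_add_le[OF assms(1)] unfolding third_def a'_def by fastforce
  qed
qed

lemma circ_adj_sym: "circ_adj M S i j \<Longrightarrow> circ_adj M S j i"
  unfolding circ_adj_def by (auto split: if_splits)

lemma circ_adj_jump_less:
  assumes "circ_adj M S i j" "i < j"
  obtains d where "d \<in> S" "(i + d) mod M = j \<or> (j + d) mod M = i"
proof -
  have "j < M" and jump: "min (j - i) (M - (j - i)) \<in> S"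
    using assms unfolding circ_adj_def by auto
  show ?thesis
  proof (cases "j - i \<le> M - (j - i)")
    case True
    with jump have "j - i \<in> S" by (simp add: min.absorb1)
    moreover have "(i + (j - i)) mod M = j" using assms(2) \<open>j < M\<close> by simp
    ultimately show ?thesis using that by blast
  next
    case False
    with jump have "M - (j - i) \<in> S" by (simp add: min.absorb2)
    moreover have "(j + (M - (j - i))) mod M = i" using assms(2) \<open>j < M\<close> by simp
    ultimately show ?thesis using that by blast
  qed
qed

lemma circ_adj_jump:
  assumes "circ_adj M S i j"
  obtains d where "d \<in> S" "(i + d) mod M = j \<or> (j + d) mod M = i"
proof (cases "i < j")
  case True
  then show ?thesis using circ_adj_jump_less[OF assms] that by blast
next
  case False
  then have "j < i" using assms unfolding circ_adj_def by auto
  then show ?thesis using circ_adj_jump_less[OF circ_adj_sym[OF assms]] that by blast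
qed

lemma third_mult_circ_adj:
  assumes "0 < M" "\<forall>d\<in>S. middle_third M (t * d mod M)" "circ_adj M S i j"
  shows "third M (t * i) \<noteq> third M (t * j)"
proof -
  have "third M (t * ((a + d) mod M)) \<noteq> third M (t * a)" if "d \<in> S" for a d
  proof -
    have "third M (t * ((a + d) mod M)) = third M (t * a + t * d)"
      by (metis third_mod mod_mult_right_eq distrib_left)
    then show ?thesis using third_add_middle_third[OF assms(1)] assms(2) that by simp
  qed
  with circ_adj_jump[OF assms(3)] show ?thesis by metis
qed

lemma circulant_word_representable:
  assumes "0 < M" "\<forall>d\<in>S. middle_third M (t * d mod M)"
  shows "word_representable (circ_vertices M) (circ_adj M S)"
  unfolding circ_vertices_def
proof (rule three_colourable_imp_word_representable)
  show "third M (t * i) \<noteq> third M (t * j)" if "circ_adj M S i j" for i j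
    using third_mult_circ_adj[OF assms that] .
qed (use circ_adj_sym third_less_3[OF assms(1)] in auto)

section \<open>Multipliers for the jumps 1, x and n\<close>

definition separating_multiplier :: "nat \<Rightarrow> nat \<Rightarrow> nat \<Rightarrow> bool" where
  "separating_multiplier n x t \<longleftrightarrow>
     odd t \<and> 2 * n \<le> 3 * t \<and> 3 * t \<le> 4 * n \<and> middle_third (2 * n) (t * x mod (2 * n))"

lemma mod_eq_if_eq_mult_add:
  fixes a M q r :: nat
  assumes "a = M * q + r" "r < M"
  shows "a mod M = r"
  using assms by simp

lemma separating_multiplier_jumps:
  assumes "separating_multiplier n x t"
  shows "\<forall>d\<in>{1, x, n}. middle_third (2 * n) (t * d mod (2 * n))"
proof -
  obtain s where t: "t = 2 * s + 1" using assms oddE unfolding separating_multiplier_def by blast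
  have "0 < n" using assms unfolding separating_multiplier_def t by simp
  have "t * n = 2 * n * s + n" unfolding t by (simp add: algebra_simps)
  then have "t * n mod (2 * n) = n" using \<open>0 < n\<close> by (simp add: mod_eq_if_eq_mult_add)
  moreover have "t mod (2 * n) = t"
    using assms \<open>0 < n\<close> unfolding separating_multiplier_def by simp
  ultimately show ?thesis using assms by (auto simp: separating_multiplier_def middle_third_def)
qed

lemma separating_multiplier_short_jump:
  assumes "n mod 3 = 2" "x mod 3 = 1" "5 * x \<le> 2 * n" "0 < x"
  shows "separating_multiplier n x ((2 * n + 5) div 3)"
proof -
  obtain a b where n: "n = 3 * a + 2" and x: "x = 3 * b + 1"
    using assms(1,2) by (metis div_mult_mod_eq mult.commute)
  have t: "(2 * n + 5) div 3 = 2 * a + 3" unfolding n by simp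
  have "(2 * a + 3) * x = 2 * n * b + (2 * a + 3 + 5 * b)" unfolding n x by (simp add: algebra_simps)
  moreover have "2 * a + 3 + 5 * b < 2 * n" using assms(3) unfolding n x by simp
  ultimately have "(2 * a + 3) * x mod (2 * n) = 2 * a + 3 + 5 * b" by (rule mod_eq_if_eq_mult_add)
  then show ?thesis using assms(3,4) unfolding separating_multiplier_def middle_third_def t
    by (simp add: n x)
qed

lemma separating_multiplier_odd_odd:
  assumes "odd n" "odd x"
  shows "separating_multiplier n x n"
proof -
  obtain s where x: "x = 2 * s + 1" using assms(2) oddE by blast
  have "n * x = 2 * n * s + n" unfolding x by (simp add: algebra_simps)
  moreover have "0 < n" using assms(1) by (rule odd_pos)
  ultimately have "n * x mod (2 * n) = n" by (simp add: mod_eq_if_eq_mult_add)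
  then show ?thesis using assms(1)
    unfolding separating_multiplier_def middle_third_def \<open>n * x mod (2 * n) = n\<close> by simp
qed

lemma separating_multiplier_odd_even:
  assumes "odd n" "even x" "n \<le> 3 * x" "2 * x < n" "6 \<le> n"
  shows "separating_multiplier n x (n + 2)"
proof -
  obtain s where x: "x = 2 * s" using assms(2) evenE by blast
  have "(n + 2) * x = 2 * n * s + 2 * x" unfolding x by (simp add: algebra_simps)
  then have "(n + 2) * x mod (2 * n) = 2 * x" using assms(4) by (simp add: mod_eq_if_eq_mult_add)
  then show ?thesis using assms unfolding separating_multiplier_def middle_third_def by simp
qed

lemma exists_residue_mult_in_window:
  fixes e m r :: nat
  assumes "3 \<le> e" "5 * e < m" "r < 4"
  shows "\<exists>k. k mod 4 = r \<and> m \<le> 3 * (k * e) \<and> 3 * (k * e) \<le> 5 * m \<and> 3 * k \<le> 2 * m"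
proof -
  define k0 where "k0 = m div (3 * e)"
  have k0: "k0 * (3 * e) \<le> m" "m < 3 * e + k0 * (3 * e)"
    unfolding k0_def using assms(1) by (simp_all add: dividend_less_div_times)
  have "\<exists>k. k0 < k \<and> k \<le> k0 + 4 \<and> k mod 4 = r" using assms(3) by presburger
  then obtain k where k: "k0 < k" "k \<le> k0 + 4" "k mod 4 = r" by blast
  have "m \<le> 3 * (k * e)"
  proof -
    have "(k0 + 1) * (3 * e) \<le> k * (3 * e)" using k(1) by (intro mult_le_mono1) simp
    then show ?thesis using k0(2) by (simp add: algebra_simps)
  qed
  moreover have "3 * (k * e) \<le> 5 * m"
  proof -
    have "k * (3 * e) \<le> (k0 + 4) * (3 * e)" using k(2) by (intro mult_le_mono1)
    then show ?thesis using k0(1) assms(2) by (simp add: algebra_simps)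
  qed
  moreover have "3 * k \<le> 2 * m"
  proof -
    have "k0 * 9 \<le> k0 * (3 * e)" using assms(1) by (intro mult_le_mono2) simp
    then show ?thesis using k0(1) k(2) assms by linarith
  qed
  ultimately show ?thesis using k(3) by blast
qed

lemma separating_multiplier_even:
  assumes "even n" "2 * x < n" "2 * n < 5 * x" "3 dvd (n - 2 * x)"
  shows "\<exists>t. separating_multiplier n x t"
proof -
  obtain m where n: "n = 2 * m" using assms(1) by blast
  define e where "e = m - x"
  have me: "m = x + e" and "0 < e" and "5 * e < m" using assms(2,3) unfolding n e_def by auto
  have "3 dvd e" using assms(4) unfolding n e_def by presburger
  with \<open>0 < e\<close> have "3 \<le> e" by (auto dest: dvd_imp_le)
  text \<open>With t = 2m + k and \<open>k + 2x \<equiv> 3 (mod 4)\<close> one gets \<open>t x \<equiv> 3m - k e (mod 4m)\<close>.\<close>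
  obtain k where k: "k mod 4 = (3 + 2 * x) mod 4" and lower: "m \<le> 3 * (k * e)"
    and upper: "3 * (k * e) \<le> 5 * m" and "3 * k \<le> 2 * m"
    using exists_residue_mult_in_window[OF \<open>3 \<le> e\<close> \<open>5 * e < m\<close>, of "(3 + 2 * x) mod 4"]
    by auto
  define q where "q = (k + 2 * x) div 4"
  have "k + 2 * x = 4 * q + 3"
    unfolding q_def using k div_mult_mod_eq[of "k + 2 * x" 4] by presburger
  have "(2 * m + k) * x + k * e = m * (k + 2 * x)" unfolding me by (simp add: algebra_simps)
  also have "\<dots> = 4 * m * q + 3 * m" unfolding \<open>k + 2 * x = 4 * q + 3\<close> by (simp add: algebra_simps)
  finally have "(2 * m + k) * x = 2 * n * q + (3 * m - k * e)" using upper unfolding n by simp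
  moreover have "3 * m - k * e < 2 * n" using \<open>0 < e\<close> \<open>5 * e < m\<close> unfolding n by simp
  ultimately have "(2 * m + k) * x mod (2 * n) = 3 * m - k * e" by (rule mod_eq_if_eq_mult_add)
  moreover have "middle_third (2 * n) (3 * m - k * e)"
    using lower upper unfolding middle_third_def n by arith
  moreover have "odd (2 * m + k)" using \<open>k + 2 * x = 4 * q + 3\<close> by presburger
  ultimately have "separating_multiplier n x (2 * m + k)"
    using \<open>3 * k \<le> 2 * m\<close> unfolding separating_multiplier_def n by simp
  then show ?thesis ..
qed

lemma exists_separating_multiplier:
  assumes "1 < x" "2 * x < n" "n mod 3 = 2" "x mod 3 = 1"
  shows "\<exists>t. separating_multiplier n x t"
proof (cases "5 * x \<le> 2 * n")
  case True
  then show ?thesis using separating_multiplier_short_jump assms by blast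
next
  case False
  consider "odd n" "odd x" | "odd n" "even x" | "even n" by blast
  then show ?thesis
  proof cases
    case 1
    then show ?thesis using separating_multiplier_odd_odd by blast
  next
    case 2
    have "n \<le> 3 * x" using False by simp
    moreover have "6 \<le> n" using assms by presburger
    ultimately show ?thesis using separating_multiplier_odd_even 2 assms(2) by blast
  next
    case 3
    have "3 dvd (n - 2 * x)" using assms by presburger
    then show ?thesis using separating_multiplier_even 3 assms(2) False by simp
  qed
qed

theorem theorem26:
  fixes n x :: nat
  assumes "1 < x" and "x < n"
    and "n mod 3 = 2" and "x mod 3 = 1"
    and "2 * x < n"
  shows "word_representable (circ_vertices (2 * n)) (circ_adj (2 * n) {1, x, n})"
proof -
  have "0 < 2 * n" using assms(2) by simp
  moreover obtain t where "separating_multiplier n x t"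
    using exists_separating_multiplier assms(1,3,4,5) by blast
  then have "\<forall>d\<in>{1, x, n}. middle_third (2 * n) (t * d mod (2 * n))"
    by (rule separating_multiplier_jumps)
  ultimately show ?thesis by (rule circulant_word_representable)
qed

end
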